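(* Suppose Assumptions 1, 2, 3 and 6 hold. Then for every sufficiently large $n$, $$R_n(\mathbf w_n^* )\ \ge\ \tfrac12\,R_n(m_n^* ),$$ and consequently $R_n(m_n^* )\asymp R_n(\mathbf w_n^* )$ (equivalently, $\Delta_n\le \tfrac12 R_n(m_n^* )$ for all large $n$). No restriction on the number $M_n$ of candidate models is needed.
   Context: Setting. For each sample size $n$ one observes $\mathbf y=\boldsymbol\mu+\boldsymbol\varepsilon\in\mathbb R^n$ with $\boldsymbol\mu=\mathbf X\boldsymbol\beta$, where $\mathbf X=(x_{ij})$ is a nonstochastic $n\times p_n$ matrix with $p_n<n$, $\boldsymbol\beta\in\mathbb R^{p_n}$, $E(\boldsymbol\varepsilon)=\mathbf 0$ and $\mathrm{Cov}(\boldsymbol\varepsilon)=\boldsymbol\Omega$ positive definite (all of these may depend on $n$). Fix integers $0=\nu_0<\nu_1<\cdots<\nu_{q_n}=p_n$. For $m=1,\dots,q_n$, $\mathbf X_m$ denotes the $n\times\nu_m$ matrix formed by the first $\nu_m$ columns of $\mathbf X$ (assumed of full column rank), $\mathbf P_m=\mathbf X_m(\mathbf X_m^\top\mathbf X_m)^{-1}\mathbf X_m^\top$, and $\mathbf P_0=\mathbf 0$. The candidate (nested) models are $m\in\{1,\dots,M_n\}$ with $2\le M_n\le q_n$. For a model $m$, $\hat{\boldsymbol\mu}_m=\mathbf P_m\mathbf y$ and $R_n(m)=E\|\hat{\boldsymbol\mu}_m-\boldsymbol\mu\|^2$. For $\mathbf w=(w_1,\dots,w_{M_n})^\top$, $\mathbf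 P(\mathbf w)=\sum_{m=1}^{M_n}w_m\mathbf P_m$, $\hat{\boldsymbol\mu}(\mathbf w)=\mathbf P(\mathbf w)\mathbf y$ and $R_n(\mathbf w)=E\|\hat{\boldsymbol\mu}(\mathbf w)-\boldsymbol\mu\|^2$. Let $\mathcal W_n=\{\mathbf w\in[0,1]^{M_n}:\sum_{m}w_m=1\}$. Let $m_n^*$ be the minimizer of $R_n(m)$ over $\{1,\dots,M_n\}$, $m_n^{**}$ the minimizer of $R_n(m)$ over $\{1,\dots,q_n\}$, and $\mathbf w_n^*$ the minimizer of $R_n(\mathbf w)$ over $\mathcal W_n$ (all assumed unique). Put $\Delta_n=R_n(m_n^* )-R_n(\mathbf w_n^* )$. Grouped variable importance: for $m=1,\dots,q_n$, $$\theta_{n,m}=\frac{n^{-1}\boldsymbol\mu^\top(\mathbf P_m-\mathbf P_{m-1})\boldsymbol\mu}{\mathrm{tr}\{(\mathbf P_m-\mathbf P_{m-1})\boldsymbol\Omega\}},$$ and $d_n=\max\{m\in\{1,\dots,q_n\}:\theta_{n,m}>0\}$. Assumption 1: $\|\boldsymbol\mu\|^2/n=O(1)$. Assumption 2: there are constants $0<c_1\le c_2<\infty$ with $c_1<\lambda_{\min}(\boldsymbol\Omega)\le\lambda_{\max}(\boldsymbol\Omega)<c_2$ for all $n$. Assumption 3: for each sufficiently large $n$, $\theta_{n,1}\ge\theta_{n,2}\ge\cdots\ge\theta_{n,q_n}$. Assumption 6: for each sufficiently large $n$, $R_n(m)$ is first decreasing and then increasing as $m$ runs from $1$ to $d_n$: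 there is $m_n'\in\{1,\dots,d_n-1\}$ with $R_n(m)<R_n(m-1)$ for $2\le m\le m_n'$, $R_n(m)\ge R_n(m-1)$ for $m_n'<m\le d_n$, and $R_n(d_n)>R_n(d_n-1)$. Notation: for positive deterministic sequences, $a_n\asymp b_n$ means $a_n/b_n$ and $b_n/a_n$ are both bounded for all large $n$. *)

theory Defs
  imports "HOL-Probability.Probability" "Jordan_Normal_Form.Gauss_Jordan_Elimination"
    "Jordan_Normal_Form.Char_Poly"
begin

definition mtrace :: "real mat \<Rightarrow> real" where
  "mtrace A = (\<Sum>i<dim_row A. A $$ (i, i))"

definition first_cols :: "real mat \<Rightarrow> nat \<Rightarrow> real mat" where
  "first_cols X k = mat (dim_row X) k (\<lambda>(i, j). X $$ (i, j))"

definition full_col_rank :: "real mat \<Rightarrow> bool" where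
  "full_col_rank A \<longleftrightarrow> (\<forall>v \<in> carrier_vec (dim_col A). A *\<^sub>v v = 0\<^sub>v (dim_row A) \<longrightarrow> v = 0\<^sub>v (dim_col A))"

definition pos_def :: "real mat \<Rightarrow> bool" where
  "pos_def A \<longleftrightarrow> A \<in> carrier_mat (dim_row A) (dim_row A) \<and> A\<^sup>T = A \<and>
     (\<forall>x \<in> carrier_vec (dim_row A). x \<noteq> 0\<^sub>v (dim_row A) \<longrightarrow> x \<bullet> (A *\<^sub>v x) > 0)"

definition hat :: "real mat \<Rightarrow> real mat" where
  "hat Z = Z * the (mat_inverse (Z\<^sup>T * Z)) * Z\<^sup>T"

definition projm :: "real mat \<Rightarrow> (nat \<Rightarrow> nat) \<Rightarrow> nat \<Rightarrow> real mat" where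
  "projm X nu m = (if m = 0 then 0\<^sub>m (dim_row X) (dim_row X) else hat (first_cols X (nu m)))"

definition projw :: "real mat \<Rightarrow> (nat \<Rightarrow> nat) \<Rightarrow> nat \<Rightarrow> (nat \<Rightarrow> real) \<Rightarrow> real mat" where
  "projw X nu M w = mat (dim_row X) (dim_row X) (\<lambda>(i, j). \<Sum>m=1..M. w m * projm X nu m $$ (i, j))"

definition obs :: "real vec \<Rightarrow> (nat \<Rightarrow> 'a \<Rightarrow> real) \<Rightarrow> 'a \<Rightarrow> real vec" where
  "obs mu eps \<omega> = mu + vec (dim_vec mu) (\<lambda>i. eps i \<omega>)"

definition risk :: "'a measure \<Rightarrow> (nat \<Rightarrow> 'a \<Rightarrow> real) \<Rightarrow> real vec \<Rightarrow> real mat \<Rightarrow> real" where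
  "risk Mes eps mu P = (\<integral>\<omega>. (P *\<^sub>v obs mu eps \<omega> - mu) \<bullet> (P *\<^sub>v obs mu eps \<omega> - mu) \<partial>Mes)"

definition theta :: "real mat \<Rightarrow> (nat \<Rightarrow> nat) \<Rightarrow> real vec \<Rightarrow> real mat \<Rightarrow> nat \<Rightarrow> real" where
  "theta X nu mu Om m =
     ((mu \<bullet> ((projm X nu m - projm X nu (m - 1)) *\<^sub>v mu)) / real (dim_vec mu))
     / mtrace ((projm X nu m - projm X nu (m - 1)) * Om)"

definition simplexW :: "nat \<Rightarrow> (nat \<Rightarrow> real) set" where
  "simplexW M = {w. (\<forall>m\<in>{1..M}. 0 \<le> w m \<and> w m \<le> 1) \<and> (\<Sum>m=1..M. w m) = 1}"

definition riskm :: "'a measure \<Rightarrow> (nat \<Rightarrow> 'a \<Rightarrow> real) \<Rightarrow> real vec \<Rightarrow> real mat \<Rightarrow> (nat \<Rightarrow> nat) \<Rightarrow> nat \<Rightarrow> real" where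
  "riskm Mes eps mu X nu m = risk Mes eps mu (projm X nu m)"

definition riskw :: "'a measure \<Rightarrow> (nat \<Rightarrow> 'a \<Rightarrow> real) \<Rightarrow> real vec \<Rightarrow> real mat \<Rightarrow> (nat \<Rightarrow> nat) \<Rightarrow> nat \<Rightarrow> (nat \<Rightarrow> real) \<Rightarrow> real" where
  "riskw Mes eps mu X nu M w = risk Mes eps mu (projw X nu M w)"

end

theory Submission
  imports Defs
begin

text \<open>Write a_j = \<mu>^T (P_j - P_{j-1}) \<mu> and b_j = tr((P_j - P_{j-1}) \<Omega>) for the signal and noise
  increments of the nested projections, and \<gamma>_j = w_j + ... + w_M for the tail weights of w.
  Since P_m P_l = P_{min m l}, the risk of the averaged estimator is
    R(w) = \<parallel>\<mu>\<parallel>^2 - \<Sum>_j a_j + \<Sum>_j ((1 - \<gamma>_j)^2 a_j + \<gamma>_j^2 b_j),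
  and a single model m has \<gamma>_j = [j \<le> m]. Each summand is at least min(a_j, b_j)/2.
  By Assumption 3 the ratios a_j/b_j decrease, so the last model whose noise increment does not
  exceed its signal increment pays exactly min(a_j, b_j) in every coordinate j \<ge> 2, while the
  coordinate j = 1, where \<gamma>_1 = 1, contributes b_1 > 0 to both risks.\<close>

section \<open>Hat matrices\<close>

lemma gram_matrix_inverse:
  fixes Z :: "real mat"
  assumes Z: "Z \<in> carrier_mat n k" and rank: "full_col_rank Z"
  obtains B where "mat_inverse (Z\<^sup>T * Z) = Some B" "B \<in> carrier_mat k k"
    "Z\<^sup>T * Z * B = 1\<^sub>m k" "B * (Z\<^sup>T * Z) = 1\<^sub>m k"
proof -
  let ?G = "Z\<^sup>T * Z"
  have G: "?G \<in> carrier_mat k k" using Z by auto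
  have "det ?G \<noteq> 0"
  proof
    assume "det ?G = 0"
    then obtain v where v: "v \<in> carrier_vec k" "v \<noteq> 0\<^sub>v k" "?G *\<^sub>v v = 0\<^sub>v k"
      using det_0_iff_vec_prod_zero[OF G] by auto
    have Zv: "Z *\<^sub>v v \<in> carrier_vec n" using Z v by auto
    have "(Z *\<^sub>v v) \<bullet> (Z *\<^sub>v v) = (Z\<^sup>T *\<^sub>v (Z *\<^sub>v v)) \<bullet> v"
      by (rule transpose_vec_mult_scalar[OF Z v(1) Zv, symmetric])
    also have "\<dots> = (?G *\<^sub>v v) \<bullet> v" using Z v by (subst assoc_mult_mat_vec[of _ k n _ k]) auto
    finally have "(Z *\<^sub>v v) \<bullet> (Z *\<^sub>v v) = 0" using v by simp
    then have "Z *\<^sub>v v = 0\<^sub>v n" using conjugate_square_eq_0_vec[OF Zv] by simp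
    then show False using rank v Z unfolding full_col_rank_def by auto
  qed
  then have "?G \<in> Units (ring_mat TYPE(real) k undefined)"
    by (rule det_non_zero_imp_unit[OF G])
  then obtain B where B: "mat_inverse ?G = Some B"
    using mat_inverse(1)[OF G, of undefined] by (cases "mat_inverse ?G") auto
  then show ?thesis using mat_inverse(2)[OF G B] that by auto
qed

lemma hat_carrier: "Z \<in> carrier_mat n k \<Longrightarrow> hat Z \<in> carrier_mat n n"
  unfolding hat_def carrier_mat_def by simp

lemma hat_symmetric:
  fixes Z :: "real mat"
  assumes Z: "Z \<in> carrier_mat n k" and rank: "full_col_rank Z"
  shows "(hat Z)\<^sup>T = hat Z"
proof -
  obtain B where B: "mat_inverse (Z\<^sup>T * Z) = Some B" "B \<in> carrier_mat k k"
    "Z\<^sup>T * Z * B = 1\<^sub>m k" "B * (Z\<^sup>T * Z) = 1\<^sub>m k"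
    using gram_matrix_inverse[OF Z rank] .
  have G: "Z\<^sup>T * Z \<in> carrier_mat k k" and BT: "B\<^sup>T \<in> carrier_mat k k" using Z B(2) by auto
  have "(Z\<^sup>T * Z)\<^sup>T = Z\<^sup>T * Z" using transpose_mult[of "Z\<^sup>T" k n Z k] Z by simp
  then have BTG: "B\<^sup>T * (Z\<^sup>T * Z) = 1\<^sub>m k"
    using arg_cong[OF B(3), of transpose_mat] transpose_mult[OF G B(2)] by simp
  have "B\<^sup>T = B\<^sup>T * (Z\<^sup>T * Z * B)" using B BT by simp
  also have "\<dots> = B\<^sup>T * (Z\<^sup>T * Z) * B" using BT G B(2) by simp
  finally have Bsym: "B\<^sup>T = B" using BTG B(2) by simp
  have "(Z * B * Z\<^sup>T)\<^sup>T = (Z\<^sup>T)\<^sup>T * (Z * B)\<^sup>T"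
    using Z B(2) by (subst transpose_mult[of _ n k _ n]) auto
  also have "\<dots> = Z * (B\<^sup>T * Z\<^sup>T)"
    using Z B(2) by (subst transpose_mult[of _ n k _ k]) auto
  also have "\<dots> = Z * B * Z\<^sup>T" using Bsym Z B(2) by simp
  finally show ?thesis unfolding hat_def B(1) by simp
qed

lemma hat_mult_self:
  fixes Z :: "real mat"
  assumes Z: "Z \<in> carrier_mat n k" and rank: "full_col_rank Z"
  shows "hat Z * Z = Z"
proof -
  obtain B where B: "mat_inverse (Z\<^sup>T * Z) = Some B" "B \<in> carrier_mat k k"
    "B * (Z\<^sup>T * Z) = 1\<^sub>m k"
    using gram_matrix_inverse[OF Z rank] by metis
  have "Z * B * Z\<^sup>T * Z = Z * B * (Z\<^sup>T * Z)" using Z B(2) by (intro assoc_mult_mat) auto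
  also have "\<dots> = Z * (B * (Z\<^sup>T * Z))" using Z B(2) by (intro assoc_mult_mat) auto
  finally show ?thesis unfolding hat_def B(1) using B(3) Z by simp
qed

lemma hat_mult_first_cols:
  fixes Z :: "real mat"
  assumes Z: "Z \<in> carrier_mat n k" and rank: "full_col_rank Z" and "j \<le> k"
  shows "hat Z * first_cols Z j = first_cols Z j"
proof (rule eq_matI)
  fix r s assume "r < dim_row (first_cols Z j)" "s < dim_col (first_cols Z j)"
  then have r: "r < n" and s: "s < j" using Z unfolding first_cols_def by auto
  have "col (first_cols Z j) s = col Z s" using s \<open>j \<le> k\<close> Z unfolding first_cols_def
    by (intro eq_vecI) auto
  then have "(hat Z * first_cols Z j) $$ (r, s) = (hat Z * Z) $$ (r, s)"
    using r s \<open>j \<le> k\<close> hat_carrier[OF Z] Z by (simp add: first_cols_def)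
  then show "(hat Z * first_cols Z j) $$ (r, s) = first_cols Z j $$ (r, s)"
    using r s \<open>j \<le> k\<close> Z hat_mult_self[OF Z rank] by (simp add: first_cols_def)
qed (use hat_carrier[OF Z] Z in \<open>auto simp: first_cols_def\<close>)

lemma hat_mult_hat_of_range:
  fixes Z Y :: "real mat"
  assumes Z: "Z \<in> carrier_mat n k" and rankZ: "full_col_rank Z"
    and Y: "Y \<in> carrier_mat n j" and rankY: "full_col_rank Y"
    and range: "hat Z * Y = Y"
  shows "hat Z * hat Y = hat Y" "hat Y * hat Z = hat Y"
proof -
  obtain B where B: "mat_inverse (Y\<^sup>T * Y) = Some B" "B \<in> carrier_mat j j"
    using gram_matrix_inverse[OF Y rankY] by metis
  have HZ: "hat Z \<in> carrier_mat n n" and HY: "hat Y \<in> carrier_mat n n"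
    using hat_carrier Z Y by auto
  have "hat Z * (Y * B * Y\<^sup>T) = (hat Z * Y) * B * Y\<^sup>T"
    using HZ Y B(2) by (simp add: assoc_mult_mat[of _ n n _ j])
  then show left: "hat Z * hat Y = hat Y" unfolding hat_def[of Y] B(1) range by simp
  have "hat Y * hat Z = (hat Z * hat Y)\<^sup>T"
    using HZ HY hat_symmetric[OF Z rankZ] hat_symmetric[OF Y rankY]
    by (simp add: transpose_mult[of _ n n _ n])
  then show "hat Y * hat Z = hat Y" using left hat_symmetric[OF Y rankY] by simp
qed

lemma first_cols_carrier: "X \<in> carrier_mat n p \<Longrightarrow> first_cols X k \<in> carrier_mat n k"
  unfolding first_cols_def by auto

lemma first_cols_first_cols: "j \<le> k \<Longrightarrow> first_cols (first_cols X k) j = first_cols X j"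
  unfolding first_cols_def by (intro eq_matI) auto

section \<open>Nested projections\<close>

lemma mono_on_interval_Suc:
  fixes f :: "nat \<Rightarrow> 'a :: order"
  assumes Suc_le: "\<And>m. a \<le> m \<Longrightarrow> m < b \<Longrightarrow> f m \<le> f (Suc m)"
    and "a \<le> i" "i \<le> j" "j \<le> b"
  shows "f i \<le> f j"
  using \<open>i \<le> j\<close> \<open>j \<le> b\<close>
proof (induction j rule: dec_induct)
  case (step k)
  then show ?case using Suc_le[of k] \<open>a \<le> i\<close> by (auto intro: order_trans)
qed simp

locale nested_design =
  fixes n p q :: nat and X :: "real mat" and nu :: "nat \<Rightarrow> nat"
  assumes X_carrier: "X \<in> carrier_mat n p"
    and nu_0: "nu 0 = 0" and nu_strict: "\<forall>m < q. nu m < nu (Suc m)"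
    and full_rank: "\<forall>m \<in> {1..q}. full_col_rank (first_cols X (nu m))"
begin

abbreviation P :: "nat \<Rightarrow> real mat" where "P m \<equiv> projm X nu m"

lemma nu_mono: "k \<le> m \<Longrightarrow> m \<le> q \<Longrightarrow> nu k \<le> nu m"
  using mono_on_interval_Suc[of 0 q nu k m] nu_strict by fastforce

lemma P_0: "P 0 = 0\<^sub>m n n"
  using X_carrier by (simp add: projm_def)

lemma P_carrier: "P m \<in> carrier_mat n n"
  using X_carrier unfolding projm_def by (auto intro!: hat_carrier first_cols_carrier)

lemma P_symmetric: "m \<le> q \<Longrightarrow> (P m)\<^sup>T = P m"
  using hat_symmetric[OF first_cols_carrier[OF X_carrier]] full_rank unfolding projm_def by auto

lemma P_mult_nested:
  assumes "k \<le> m" "m \<le> q"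
  shows "P m * P k = P k" "P k * P m = P k"
proof -
  have "P m * P k = P k \<and> P k * P m = P k"
  proof (cases "k = 0")
    case True
    then show ?thesis using P_carrier[of m] by (simp add: P_0)
  next
    case False
    let ?Zm = "first_cols X (nu m)" and ?Zk = "first_cols X (nu k)"
    have Zm: "?Zm \<in> carrier_mat n (nu m)" and Zk: "?Zk \<in> carrier_mat n (nu k)"
      using first_cols_carrier[OF X_carrier] by auto
    have rank: "full_col_rank ?Zm" "full_col_rank ?Zk" using full_rank assms False by auto
    have le: "nu k \<le> nu m" using nu_mono assms by simp
    have "hat ?Zm * ?Zk = ?Zk"
      using hat_mult_first_cols[OF Zm rank(1) le] unfolding first_cols_first_cols[OF le] .
    then show ?thesis using hat_mult_hat_of_range[OF Zm rank(1) Zk rank(2)] False assms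
      unfolding projm_def by simp
  qed
  then show "P m * P k = P k" "P k * P m = P k" by auto
qed

lemma P_mult: "k \<le> q \<Longrightarrow> m \<le> q \<Longrightarrow> P k * P m = P (min k m)"
  using P_mult_nested[of k m] P_mult_nested[of m k] by (cases "k \<le> m") (auto simp: min_def)

lemma P_1_nonzero:
  assumes "1 \<le> q"
  shows "\<exists>k<n. \<exists>i<n. P 1 $$ (k, i) \<noteq> 0"
proof (rule ccontr)
  let ?Z = "first_cols X (nu 1)"
  assume "\<not> ?thesis"
  then have "P 1 = 0\<^sub>m n n" using P_carrier[of 1] by (intro eq_matI) auto
  moreover have Z: "?Z \<in> carrier_mat n (nu 1)" using first_cols_carrier[OF X_carrier] .
  moreover have rank: "full_col_rank ?Z" using full_rank assms by auto
  ultimately have "?Z = 0\<^sub>m n (nu 1)" using hat_mult_self[OF Z rank] by (simp add: projm_def)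
  then have "?Z *\<^sub>v unit_vec (nu 1) 0 = 0\<^sub>v n" by (intro eq_vecI) (auto simp: mult_mat_vec_def)
  then have "unit_vec (nu 1) 0 = (0\<^sub>v (nu 1) :: real vec)"
    using rank Z unfolding full_col_rank_def by auto
  moreover have "0 < nu 1" using nu_strict[rule_format, of 0] nu_0 assms by simp
  ultimately show False using unit_vec_nonzero[of "nu 1" 0] by simp
qed

end

section \<open>Risk of a linear estimator\<close>

text \<open>\<open>noise_inner n Om A C\<close> is E\<langle>A \<epsilon>, C \<epsilon>\<rangle> for a noise vector \<epsilon> with covariance matrix \<open>Om\<close>.\<close>

definition noise_inner :: "nat \<Rightarrow> real mat \<Rightarrow> real mat \<Rightarrow> real mat \<Rightarrow> real" where
  "noise_inner n Om A C = (\<Sum>k<n. \<Sum>i<n. \<Sum>j<n. A $$ (k, i) * C $$ (k, j) * Om $$ (i, j))"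

locale noise_model =
  fixes n :: nat and Mes :: "'a measure" and eps :: "nat \<Rightarrow> 'a \<Rightarrow> real" and Om :: "real mat"
  assumes prob: "prob_space Mes"
    and mean_zero: "\<forall>i < n. integrable Mes (eps i) \<and> (\<integral>\<omega>. eps i \<omega> \<partial>Mes) = 0"
    and covariance: "\<forall>i < n. \<forall>j < n. integrable Mes (\<lambda>\<omega>. eps i \<omega> * eps j \<omega>) \<and>
          (\<integral>\<omega>. eps i \<omega> * eps j \<omega> \<partial>Mes) = Om $$ (i, j)"
begin

lemma has_integral_const: "has_bochner_integral Mes (\<lambda>_. c) (c :: real)"
  using prob prob_space.prob_space[OF prob]
  by (simp add: has_bochner_integral_iff finite_measure.integrable_const prob_space.finite_measure)

lemma has_integral_sq_affine_noise:
  "has_bochner_integral Mes (\<lambda>\<omega>. (d + (\<Sum>i<n. a i * eps i \<omega>))\<^sup>2)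
     (d\<^sup>2 + (\<Sum>i<n. \<Sum>j<n. a i * a j * Om $$ (i, j)))"
proof -
  have mean: "has_bochner_integral Mes (eps i) 0" if "i < n" for i
    using mean_zero that by (simp add: has_bochner_integral_iff)
  have cov: "has_bochner_integral Mes (\<lambda>\<omega>. eps i \<omega> * eps j \<omega>) (Om $$ (i, j))"
    if "i < n" "j < n" for i j
    using covariance that by (simp add: has_bochner_integral_iff)
  have expand: "(d + (\<Sum>i<n. a i * eps i \<omega>))\<^sup>2 = d\<^sup>2 + (\<Sum>i<n. (2 * d * a i) * eps i \<omega>)
      + (\<Sum>i<n. \<Sum>j<n. (a i * a j) * (eps i \<omega> * eps j \<omega>))" for \<omega>
    by (simp add: power2_eq_square algebra_simps sum_distrib_left sum_product)
  have "has_bochner_integral Mes (\<lambda>\<omega>. d\<^sup>2 + (\<Sum>i<n. (2 * d * a i) * eps i \<omega>)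
      + (\<Sum>i<n. \<Sum>j<n. (a i * a j) * (eps i \<omega> * eps j \<omega>)))
      (d\<^sup>2 + (\<Sum>i<n. (2 * d * a i) * 0) + (\<Sum>i<n. \<Sum>j<n. (a i * a j) * Om $$ (i, j)))"
    by (intro has_bochner_integral_add has_bochner_integral_sum has_bochner_integral_mult_right
        has_integral_const mean cov) auto
  then show ?thesis by (simp add: expand mult.assoc)
qed

lemma risk_linear_estimator:
  assumes P: "P \<in> carrier_mat n n" and mu: "mu \<in> carrier_vec n"
  shows "risk Mes eps mu P = (\<Sum>k<n. ((P *\<^sub>v mu) $ k - mu $ k)\<^sup>2) + noise_inner n Om P P"
proof -
  have component: "(P *\<^sub>v obs mu eps \<omega> - mu) $ k
      = ((P *\<^sub>v mu) $ k - mu $ k) + (\<Sum>i<n. P $$ (k, i) * eps i \<omega>)" if "k < n" for k \<omega>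
  proof -
    let ?e = "vec n (\<lambda>i. eps i \<omega>)"
    have "P *\<^sub>v obs mu eps \<omega> = P *\<^sub>v mu + P *\<^sub>v ?e"
      using P mu by (simp add: obs_def mult_add_distrib_mat_vec[of P n n])
    moreover have "(P *\<^sub>v ?e) $ k = (\<Sum>i<n. P $$ (k, i) * eps i \<omega>)"
      using P that by (simp add: mult_mat_vec_def scalar_prod_def atLeast0LessThan)
    ultimately show ?thesis using that P mu by simp
  qed
  have pointwise: "(P *\<^sub>v obs mu eps \<omega> - mu) \<bullet> (P *\<^sub>v obs mu eps \<omega> - mu)
      = (\<Sum>k<n. (((P *\<^sub>v mu) $ k - mu $ k) + (\<Sum>i<n. P $$ (k, i) * eps i \<omega>))\<^sup>2)" for \<omega>
  proof -
    have "(P *\<^sub>v obs mu eps \<omega> - mu) \<bullet> (P *\<^sub>v obs mu eps \<omega> - mu)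
        = (\<Sum>k<n. (P *\<^sub>v obs mu eps \<omega> - mu) $ k * (P *\<^sub>v obs mu eps \<omega> - mu) $ k)"
      using mu by (simp add: scalar_prod_def atLeast0LessThan)
    also have "\<dots> = (\<Sum>k<n. (((P *\<^sub>v mu) $ k - mu $ k) + (\<Sum>i<n. P $$ (k, i) * eps i \<omega>))\<^sup>2)"
    proof (rule sum.cong[OF refl])
      fix k assume "k \<in> {..<n}"
      then show "(P *\<^sub>v obs mu eps \<omega> - mu) $ k * (P *\<^sub>v obs mu eps \<omega> - mu) $ k
          = (((P *\<^sub>v mu) $ k - mu $ k) + (\<Sum>i<n. P $$ (k, i) * eps i \<omega>))\<^sup>2"
        by (simp only: lessThan_iff component power2_eq_square)
    qed
    finally show ?thesis .
  qed
  have "has_bochner_integral Mes (\<lambda>\<omega>. \<Sum>k<n. (((P *\<^sub>v mu) $ k - mu $ k) + (\<Sum>i<n. P $$ (k, i) * eps i \<omega>))\<^sup>2)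
      (\<Sum>k<n. ((P *\<^sub>v mu) $ k - mu $ k)\<^sup>2 + (\<Sum>i<n. \<Sum>j<n. P $$ (k, i) * P $$ (k, j) * Om $$ (i, j)))"
    by (intro has_bochner_integral_sum has_integral_sq_affine_noise)
  then show ?thesis unfolding risk_def pointwise noise_inner_def
    by (simp add: has_bochner_integral_integral_eq sum.distrib)
qed

end

lemma sum_swap3:
  "(\<Sum>k\<in>K. \<Sum>m\<in>I. \<Sum>l\<in>J. F k m l) = (\<Sum>m\<in>I. \<Sum>l\<in>J. \<Sum>k\<in>K. F k m l :: 'a :: comm_monoid_add)"
proof -
  have "(\<Sum>k\<in>K. \<Sum>m\<in>I. \<Sum>l\<in>J. F k m l) = (\<Sum>m\<in>I. \<Sum>k\<in>K. \<Sum>l\<in>J. F k m l)"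
    by (rule sum.swap)
  also have "\<dots> = (\<Sum>m\<in>I. \<Sum>l\<in>J. \<Sum>k\<in>K. F k m l)"
    by (rule sum.cong[OF refl], rule sum.swap)
  finally show ?thesis .
qed

lemma sum_weighted_linear:
  "(\<Sum>k\<in>K. (\<Sum>m\<in>I. w m * x m k) * y k) = (\<Sum>m\<in>I. w m * (\<Sum>k\<in>K. x m k * y k :: 'a :: comm_semiring_0))"
proof -
  have "(\<Sum>k\<in>K. (\<Sum>m\<in>I. w m * x m k) * y k) = (\<Sum>k\<in>K. \<Sum>m\<in>I. w m * (x m k * y k))"
    by (simp add: sum_distrib_right mult.assoc)
  also have "\<dots> = (\<Sum>m\<in>I. \<Sum>k\<in>K. w m * (x m k * y k))" by (rule sum.swap)
  finally show ?thesis by (simp add: sum_distrib_left)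
qed

lemma sum_weighted_bilinear:
  "(\<Sum>k\<in>K. (\<Sum>m\<in>I. w m * x m k) * (\<Sum>l\<in>I. w l * y l k))
     = (\<Sum>m\<in>I. \<Sum>l\<in>I. w m * w l * (\<Sum>k\<in>K. x m k * y l k :: 'a :: comm_semiring_0))"
proof -
  have "(\<Sum>k\<in>K. (\<Sum>m\<in>I. w m * x m k) * (\<Sum>l\<in>I. w l * y l k))
      = (\<Sum>k\<in>K. \<Sum>m\<in>I. \<Sum>l\<in>I. w m * w l * (x m k * y l k))"
    by (simp add: sum_product algebra_simps)
  also have "\<dots> = (\<Sum>m\<in>I. \<Sum>l\<in>I. \<Sum>k\<in>K. w m * w l * (x m k * y l k))" by (rule sum_swap3)
  finally show ?thesis by (simp add: sum_distrib_left)
qed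

lemma noise_inner_weighted:
  assumes entries: "\<And>k i. k < n \<Longrightarrow> i < n \<Longrightarrow> A $$ (k, i) = (\<Sum>m\<in>I. w m * B m $$ (k, i))"
  shows "noise_inner n Om A A = (\<Sum>m\<in>I. \<Sum>l\<in>I. w m * w l * noise_inner n Om (B m) (B l))"
proof -
  let ?F = "\<lambda>m l k i j. w m * w l * (B m $$ (k, i) * B l $$ (k, j) * Om $$ (i, j))"
  have entry_product: "A $$ (k, i) * A $$ (k, j) * Om $$ (i, j) = (\<Sum>m\<in>I. \<Sum>l\<in>I. ?F m l k i j)"
    if "k < n" "i < n" "j < n" for k i j
    unfolding entries[OF that(1,2)] entries[OF that(1,3)] sum_product sum_distrib_right
    by (intro sum.cong refl) (simp add: sum_distrib_left mult_ac)
  have "noise_inner n Om A A = (\<Sum>k<n. \<Sum>i<n. \<Sum>j<n. \<Sum>m\<in>I. \<Sum>l\<in>I. ?F m l k i j)"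
    unfolding noise_inner_def by (intro sum.cong refl) (simp add: entry_product)
  also have "\<dots> = (\<Sum>k<n. \<Sum>i<n. \<Sum>m\<in>I. \<Sum>l\<in>I. \<Sum>j<n. ?F m l k i j)"
    by (intro sum.cong refl sum_swap3)
  also have "\<dots> = (\<Sum>k<n. \<Sum>m\<in>I. \<Sum>l\<in>I. \<Sum>i<n. \<Sum>j<n. ?F m l k i j)"
    by (intro sum.cong refl sum_swap3)
  also have "\<dots> = (\<Sum>m\<in>I. \<Sum>l\<in>I. \<Sum>k<n. \<Sum>i<n. \<Sum>j<n. ?F m l k i j)"
    by (rule sum_swap3)
  finally show ?thesis by (simp add: sum_distrib_left noise_inner_def)
qed

lemma noise_inner_eq_mtrace:
  assumes A: "A \<in> carrier_mat n n" and C: "C \<in> carrier_mat n n" and Om: "Om \<in> carrier_mat n n"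
    and sym: "Om\<^sup>T = Om"
  shows "noise_inner n Om A C = mtrace (A\<^sup>T * C * Om)"
proof -
  have Om_sym: "Om $$ (j, i) = Om $$ (i, j)" if "i < n" "j < n" for i j
    using arg_cong[OF sym, of "\<lambda>M. M $$ (i, j)"] that Om by auto
  have "mtrace (A\<^sup>T * C * Om) = (\<Sum>i<n. \<Sum>k<n. A $$ (k, i) * (\<Sum>j<n. C $$ (k, j) * Om $$ (j, i)))"
    unfolding mtrace_def using A C Om by (simp add: index_mult_mat scalar_prod_def atLeast0LessThan)
  also have "\<dots> = (\<Sum>i<n. \<Sum>k<n. \<Sum>j<n. A $$ (k, i) * C $$ (k, j) * Om $$ (i, j))"
    by (intro sum.cong refl) (simp add: sum_distrib_left Om_sym mult.assoc)
  also have "\<dots> = noise_inner n Om A C" unfolding noise_inner_def by (rule sum.swap)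
  finally show ?thesis ..
qed

lemma quadratic_form_pos:
  assumes pd: "pos_def Om" and Om: "Om \<in> carrier_mat n n" and "i < n" "x i \<noteq> 0"
  shows "0 < (\<Sum>i<n. \<Sum>j<n. x i * x j * Om $$ (i, j))"
proof -
  let ?v = "vec n x"
  have "(\<Sum>i<n. \<Sum>j<n. x i * x j * Om $$ (i, j)) = ?v \<bullet> (Om *\<^sub>v ?v)"
    using Om by (auto simp: scalar_prod_def mult_mat_vec_def atLeast0LessThan sum_distrib_left
        mult_ac intro!: sum.cong)
  moreover have "?v \<noteq> 0\<^sub>v n" using assms(3,4) by (metis index_vec index_zero_vec(1))
  ultimately show ?thesis using pd Om unfolding pos_def_def by auto
qed

lemma quadratic_form_nonneg:
  assumes pd: "pos_def Om" and Om: "Om \<in> carrier_mat n n"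
  shows "0 \<le> (\<Sum>i<n. \<Sum>j<n. x i * x j * Om $$ (i, j))"
proof (cases "\<exists>i<n. x i \<noteq> 0")
  case True
  then show ?thesis using quadratic_form_pos[OF pd Om] by (meson less_imp_le)
qed simp

lemma noise_inner_self_nonneg:
  "pos_def Om \<Longrightarrow> Om \<in> carrier_mat n n \<Longrightarrow> 0 \<le> noise_inner n Om A A"
  unfolding noise_inner_def by (rule sum_nonneg) (rule quadratic_form_nonneg)

lemma noise_inner_self_pos:
  assumes pd: "pos_def Om" and Om: "Om \<in> carrier_mat n n"
    and nonzero: "k < n" "i < n" "A $$ (k, i) \<noteq> 0"
  shows "0 < noise_inner n Om A A"
proof -
  let ?row = "\<lambda>k. \<Sum>i<n. \<Sum>j<n. A $$ (k, i) * A $$ (k, j) * Om $$ (i, j)"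
  have "0 < ?row k" using quadratic_form_pos[OF pd Om nonzero(2), of "\<lambda>i. A $$ (k, i)"] nonzero(3) by simp
  also have "\<dots> \<le> (\<Sum>k<n. ?row k)"
    using nonzero(1) quadratic_form_nonneg[OF pd Om] by (intro member_le_sum) auto
  finally show ?thesis unfolding noise_inner_def .
qed

section \<open>Risk of averages over nested models\<close>

definition tail_weight :: "nat \<Rightarrow> (nat \<Rightarrow> real) \<Rightarrow> nat \<Rightarrow> real" where
  "tail_weight M w j = (\<Sum>m=j..M. w m)"

text \<open>For nested projections (P_m P_l = P_{min m l}) with c m = \<mu>^T P_m \<mu> and t m = tr(P_m \<Omega>),
  \<open>nested_risk \<parallel>\<mu>\<parallel>\<^sup>2 c t M w\<close> is the risk of the averaged estimator P(w) y.\<close>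

definition nested_risk ::
  "real \<Rightarrow> (nat \<Rightarrow> real) \<Rightarrow> (nat \<Rightarrow> real) \<Rightarrow> nat \<Rightarrow> (nat \<Rightarrow> real) \<Rightarrow> real" where
  "nested_risk S c t M w = S - 2 * (\<Sum>m=1..M. w m * c m)
     + (\<Sum>m=1..M. \<Sum>l=1..M. w m * w l * (c (min m l) + t (min m l)))"

lemma sum_increments: "(\<Sum>j=1..m. f j - f (j - 1)) = f m - (f 0 :: real)" for m :: nat
  by (induction m) auto

lemma sum_increments_indicator:
  fixes m M :: nat and f :: "nat \<Rightarrow> real"
  assumes "1 \<le> m" "m \<le> M"
  shows "f m - f 0 = (\<Sum>j=1..M. if j \<le> m then f j - f (j - 1) else (0 :: real))"
proof -
  have "{j \<in> {1..M}. j \<le> m} = {1..m}" using assms by auto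
  then show ?thesis using sum_increments[where f = f and m = m] by (simp add: sum.inter_filter[symmetric])
qed

lemma tail_weight_eq_indicator_sum:
  "1 \<le> j \<Longrightarrow> tail_weight M w j = (\<Sum>m=1..M. if j \<le> m then w m else 0)"
proof -
  assume "1 \<le> j"
  then have "{m \<in> {1..M}. j \<le> m} = {j..M}" by auto
  then show ?thesis unfolding tail_weight_def by (simp add: sum.inter_filter[symmetric])
qed

lemma sum_weighted_by_tail_weights:
  fixes f :: "nat \<Rightarrow> real"
  assumes "f 0 = 0"
  shows "(\<Sum>m=1..M. w m * f m) = (\<Sum>j=1..M. tail_weight M w j * (f j - f (j - 1)))"
proof -
  have "(\<Sum>m=1..M. w m * f m) = (\<Sum>m=1..M. \<Sum>j=1..M. if j \<le> m then w m * (f j - f (j - 1)) else 0)"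
    using sum_increments_indicator[of _ M f] assms
    by (intro sum.cong refl) (auto simp: sum_distrib_left intro!: sum.cong)
  also have "\<dots> = (\<Sum>j=1..M. \<Sum>m=1..M. if j \<le> m then w m * (f j - f (j - 1)) else 0)"
    by (rule sum.swap)
  also have "\<dots> = (\<Sum>j=1..M. tail_weight M w j * (f j - f (j - 1)))"
    by (intro sum.cong refl) (auto simp: tail_weight_eq_indicator_sum sum_distrib_right intro!: sum.cong)
  finally show ?thesis .
qed

lemma sum_weighted_min_by_tail_weights:
  fixes f :: "nat \<Rightarrow> real"
  assumes "f 0 = 0"
  shows "(\<Sum>m=1..M. \<Sum>l=1..M. w m * w l * f (min m l))
    = (\<Sum>j=1..M. (tail_weight M w j)\<^sup>2 * (f j - f (j - 1)))"
proof -
  let ?u = "\<lambda>j m. if j \<le> m then w m else 0"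
  have "(\<Sum>m=1..M. \<Sum>l=1..M. w m * w l * f (min m l))
      = (\<Sum>m=1..M. \<Sum>l=1..M. \<Sum>j=1..M. (f j - f (j - 1)) * (?u j m * ?u j l))"
  proof (intro sum.cong refl)
    fix m l assume "m \<in> {1..M}" "l \<in> {1..M}"
    then have "1 \<le> min m l" "min m l \<le> M" by auto
    then have "f (min m l) = (\<Sum>j=1..M. if j \<le> min m l then f j - f (j - 1) else 0)"
      using sum_increments_indicator[of "min m l" M f] assms by simp
    then show "w m * w l * f (min m l) = (\<Sum>j=1..M. (f j - f (j - 1)) * (?u j m * ?u j l))"
      by (simp add: sum_distrib_left) (intro sum.cong refl, auto)
  qed
  also have "\<dots> = (\<Sum>j=1..M. \<Sum>m=1..M. \<Sum>l=1..M. (f j - f (j - 1)) * (?u j m * ?u j l))"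
    by (rule sum_swap3[symmetric])
  also have "\<dots> = (\<Sum>j=1..M. (tail_weight M w j)\<^sup>2 * (f j - f (j - 1)))"
    by (intro sum.cong refl)
      (simp add: tail_weight_eq_indicator_sum power2_eq_square sum_product sum_distrib_left mult.commute)
  finally show ?thesis .
qed

lemma nested_risk_tail_form:
  fixes c t :: "nat \<Rightarrow> real"
  assumes "c 0 = 0" "t 0 = 0"
  shows "nested_risk S c t M w = S - c M + (\<Sum>j=1..M.
      (1 - tail_weight M w j)\<^sup>2 * (c j - c (j - 1)) + (tail_weight M w j)\<^sup>2 * (t j - t (j - 1)))"
proof -
  let ?\<gamma> = "tail_weight M w"
  have "(\<Sum>j=1..M. (1 - ?\<gamma> j)\<^sup>2 * (c j - c (j - 1)) + (?\<gamma> j)\<^sup>2 * (t j - t (j - 1)))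
      = (\<Sum>j=1..M. (c j - c (j - 1)) - 2 * (?\<gamma> j * (c j - c (j - 1)))
          + (?\<gamma> j)\<^sup>2 * ((c j + t j) - (c (j - 1) + t (j - 1))))"
    by (intro sum.cong refl) (simp add: power2_eq_square algebra_simps)
  also have "\<dots> = c M - 2 * (\<Sum>m=1..M. w m * c m) + (\<Sum>m=1..M. \<Sum>l=1..M. w m * w l * (c (min m l) + t (min m l)))"
    using assms sum_weighted_by_tail_weights[where f = c and M = M and w = w]
      sum_weighted_min_by_tail_weights[where f = "\<lambda>m. c m + t m" and M = M and w = w]
      sum_increments[where f = c and m = M]
    by (simp add: sum.distrib sum_subtractf sum_distrib_left sum_increments)
  finally show ?thesis unfolding nested_risk_def by simp
qed

text \<open>Because \<open>(1 - g)\<^sup>2 + g\<^sup>2 \<ge> 1/2\<close>.\<close>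

lemma le_twice_weighted_squares:
  fixes a b e g :: real
  assumes "0 \<le> e" "e \<le> a" "e \<le> b"
  shows "e \<le> 2 * ((1 - g)\<^sup>2 * a + g\<^sup>2 * b)"
proof -
  have "1 \<le> 2 * ((1 - g)\<^sup>2 + g\<^sup>2)"
    using zero_le_power2[of "2 * g - 1"] by (simp add: power2_eq_square algebra_simps)
  then have "e \<le> 2 * ((1 - g)\<^sup>2 + g\<^sup>2) * e" using assms(1) by (simp add: mult_le_cancel_right1)
  moreover have "(1 - g)\<^sup>2 * e \<le> (1 - g)\<^sup>2 * a" "g\<^sup>2 * e \<le> g\<^sup>2 * b"
    using assms by (simp_all add: mult_left_mono)
  ultimately show ?thesis by (simp add: algebra_simps)
qed

text \<open>Take m0 to be the last index whose noise increment b does not exceed its signal increment a.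
  Since the ratios a/b decrease, b \<le> a up to m0 and a \<le> b beyond, so the single model m0 pays
  min(a, b) in every coordinate.\<close>

lemma tail_form_selection:
  fixes a b \<gamma> :: "nat \<Rightarrow> real"
  assumes "1 \<le> M"
    and nonneg: "\<And>j. j \<in> {1..M} \<Longrightarrow> 0 \<le> a j \<and> 0 \<le> b j"
    and degenerate: "\<And>j. j \<in> {1..M} \<Longrightarrow> b j = 0 \<Longrightarrow> a j = 0"
    and ratio_antimono: "\<And>i j. 1 \<le> i \<Longrightarrow> i \<le> j \<Longrightarrow> j \<le> M \<Longrightarrow> 0 < b i \<Longrightarrow> 0 < b j \<Longrightarrow>
      a j / b j \<le> a i / b i"
    and \<gamma>_1: "\<gamma> 1 = 1"
  obtains m0 where "m0 \<in> {1..M}"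
    "(\<Sum>j=1..M. if j \<le> m0 then b j else a j)
       \<le> 2 * (\<Sum>j=1..M. (1 - \<gamma> j)\<^sup>2 * a j + (\<gamma> j)\<^sup>2 * b j)"
proof -
  define A where "A = {m \<in> {1..M}. m = 1 \<or> (0 < b m \<and> b m \<le> a m)}"
  define m0 where "m0 = Max A"
  have "finite A" "1 \<in> A" using \<open>1 \<le> M\<close> unfolding A_def by auto
  then have m0_A: "m0 \<in> A" and le_m0: "\<And>j. j \<in> A \<Longrightarrow> j \<le> m0"
    unfolding m0_def using Max_in Max_ge by blast+
  then have m0: "m0 \<in> {1..M}" unfolding A_def by auto
  have termwise: "(if j \<le> m0 then b j else a j) \<le> 2 * ((1 - \<gamma> j)\<^sup>2 * a j + (\<gamma> j)\<^sup>2 * b j)"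
    if j: "j \<in> {1..M}" for j
  proof (cases "j = 1")
    case True
    then show ?thesis using \<gamma>_1 m0 nonneg[OF j] by simp
  next
    case False
    have "b j \<le> a j" if "j \<le> m0"
    proof (cases "b j = 0")
      case True
      then show ?thesis using nonneg[OF j] by simp
    next
      case False
      then have "0 < b j" using nonneg[OF j] by simp
      moreover have "0 < b m0" "b m0 \<le> a m0"
        using m0_A \<open>j \<noteq> 1\<close> \<open>j \<le> m0\<close> j unfolding A_def by auto
      moreover have "a m0 / b m0 \<le> a j / b j"
        using ratio_antimono[of j m0] \<open>0 < b j\<close> \<open>0 < b m0\<close> j \<open>j \<le> m0\<close> m0 by auto
      moreover have "1 \<le> a m0 / b m0" using \<open>0 < b m0\<close> \<open>b m0 \<le> a m0\<close> by simp
      ultimately have "1 \<le> a j / b j" by linarith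
      then show ?thesis using \<open>0 < b j\<close> by (simp add: le_divide_eq)
    qed
    moreover have "a j \<le> b j" if "\<not> j \<le> m0"
    proof -
      have "j \<notin> A" using le_m0 that by auto
      then have "\<not> (0 < b j \<and> b j \<le> a j)" using j unfolding A_def by auto
      then show ?thesis using degenerate[OF j] nonneg[OF j] by force
    qed
    ultimately show ?thesis using nonneg[OF j] le_twice_weighted_squares by auto
  qed
  have "(\<Sum>j=1..M. if j \<le> m0 then b j else a j)
      \<le> (\<Sum>j=1..M. 2 * ((1 - \<gamma> j)\<^sup>2 * a j + (\<gamma> j)\<^sup>2 * b j))"
    by (rule sum_mono) (rule termwise)
  then show ?thesis by (intro that[OF m0]) (simp add: sum_distrib_left)
qed

lemma nested_risk_single_model:
  fixes c t :: "nat \<Rightarrow> real"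
  assumes "m0 \<in> {1..M}" "c 0 = 0" "t 0 = 0"
  shows "nested_risk S c t M (\<lambda>m. if m = m0 then 1 else 0)
    = S - c M + (\<Sum>j=1..M. if j \<le> m0 then t j - t (j - 1) else c j - c (j - 1))"
proof -
  have weights: "tail_weight M (\<lambda>m. if m = m0 then 1 else 0) j = (if j \<le> m0 then 1 else 0)" for j
    using assms(1) unfolding tail_weight_def by simp
  show ?thesis unfolding nested_risk_tail_form[where c = c and t = t, OF assms(2,3)] weights
    by (intro arg_cong2[where f = "(+)"] refl sum.cong) auto
qed

lemma nested_risk_average_bounds:
  fixes S :: real and c t w :: "nat \<Rightarrow> real"
  assumes "1 \<le> M" and c_0: "c 0 = 0" and t_0: "t 0 = 0"
    and c_mono: "\<And>j. j \<in> {1..M} \<Longrightarrow> c (j - 1) \<le> c j"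
    and t_mono: "\<And>j. j \<in> {1..M} \<Longrightarrow> t (j - 1) \<le> t j"
    and t_flat: "\<And>j. j \<in> {1..M} \<Longrightarrow> t (j - 1) = t j \<Longrightarrow> c (j - 1) = c j"
    and "c M \<le> S" and "0 < t 1"
    and ratio_antimono: "\<And>i j. 1 \<le> i \<Longrightarrow> i \<le> j \<Longrightarrow> j \<le> M \<Longrightarrow> t (i - 1) < t i \<Longrightarrow>
      t (j - 1) < t j \<Longrightarrow> (c j - c (j - 1)) / (t j - t (j - 1)) \<le> (c i - c (i - 1)) / (t i - t (i - 1))"
    and w_sum: "(\<Sum>m=1..M. w m) = 1"
  shows "0 < nested_risk S c t M w"
    and "\<exists>m0\<in>{1..M}. nested_risk S c t M (\<lambda>m. if m = m0 then 1 else 0) \<le> 2 * nested_risk S c t M w"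
proof -
  define a where "a j = c j - c (j - 1)" for j
  define b where "b j = t j - t (j - 1)" for j
  let ?\<gamma> = "tail_weight M w"
  let ?T = "\<lambda>j. (1 - ?\<gamma> j)\<^sup>2 * a j + (?\<gamma> j)\<^sup>2 * b j"
  have risk_w: "nested_risk S c t M w = (S - c M) + (\<Sum>j=1..M. ?T j)"
    using nested_risk_tail_form[where c = c and t = t, OF c_0 t_0] unfolding a_def b_def by simp
  have nonneg: "0 \<le> a j \<and> 0 \<le> b j" if "j \<in> {1..M}" for j
    using c_mono t_mono that unfolding a_def b_def by auto
  have \<gamma>_1: "?\<gamma> 1 = 1" using w_sum unfolding tail_weight_def .
  have "t 1 = ?T 1" using \<gamma>_1 t_0 unfolding b_def by simp
  also have "\<dots> \<le> (\<Sum>j=1..M. ?T j)" using \<open>1 \<le> M\<close> nonneg by (intro member_le_sum) auto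
  finally show "0 < nested_risk S c t M w" using risk_w \<open>c M \<le> S\<close> \<open>0 < t 1\<close> by simp
  obtain m0 where m0: "m0 \<in> {1..M}"
    "(\<Sum>j=1..M. if j \<le> m0 then b j else a j) \<le> 2 * (\<Sum>j=1..M. ?T j)"
  proof (rule tail_form_selection[of M a b ?\<gamma>])
    show "\<And>j. j \<in> {1..M} \<Longrightarrow> b j = 0 \<Longrightarrow> a j = 0" using t_flat unfolding a_def b_def by force
    show "\<And>i j. 1 \<le> i \<Longrightarrow> i \<le> j \<Longrightarrow> j \<le> M \<Longrightarrow> 0 < b i \<Longrightarrow> 0 < b j \<Longrightarrow> a j / b j \<le> a i / b i"
      using ratio_antimono unfolding a_def b_def by simp
  qed (use \<open>1 \<le> M\<close> nonneg \<gamma>_1 in auto)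
  have "nested_risk S c t M (\<lambda>m. if m = m0 then 1 else 0) = (S - c M) + (\<Sum>j=1..M. if j \<le> m0 then b j else a j)"
    using nested_risk_single_model[where c = c and t = t, OF m0(1) c_0 t_0] unfolding a_def b_def by simp
  also have "\<dots> \<le> 2 * nested_risk S c t M w" using m0(2) risk_w \<open>c M \<le> S\<close> by simp
  finally show "\<exists>m0\<in>{1..M}. nested_risk S c t M (\<lambda>m. if m = m0 then 1 else 0) \<le> 2 * nested_risk S c t M w"
    using m0(1) by blast
qed

lemma mult_mat_vec_index_sum:
  "A \<in> carrier_mat n n \<Longrightarrow> v \<in> carrier_vec n \<Longrightarrow> k < n \<Longrightarrow> (A *\<^sub>v v) $ k = (\<Sum>i<n. A $$ (k, i) * v $ i)"
  by (auto simp: mult_mat_vec_def scalar_prod_def atLeast0LessThan intro!: sum.cong)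

locale nested_model = nested_design +
  fixes Om :: "real mat" and mu :: "real vec"
  assumes Om_carrier: "Om \<in> carrier_mat n n" and Om_pos_def: "pos_def Om"
    and mu_carrier: "mu \<in> carrier_vec n"
begin

definition signal :: "nat \<Rightarrow> real" where "signal m = mu \<bullet> (P m *\<^sub>v mu)"

definition noise :: "nat \<Rightarrow> real" where "noise m = mtrace (P m * Om)"

lemma Om_symmetric: "Om\<^sup>T = Om"
  using Om_pos_def unfolding pos_def_def by simp

lemma signal_0: "signal 0 = 0"
proof -
  have "0\<^sub>m n n *\<^sub>v mu = 0\<^sub>v n" using mu_carrier by (intro eq_vecI) (auto simp: mult_mat_vec_def)
  then show ?thesis using mu_carrier unfolding signal_def P_0 by simp
qed

lemma noise_0: "noise 0 = 0"
  using Om_carrier unfolding noise_def mtrace_def P_0 by simp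

lemma P_mult_vec_index: "k < n \<Longrightarrow> (P m *\<^sub>v mu) $ k = (\<Sum>i<n. P m $$ (k, i) * mu $ i)"
  using mult_mat_vec_index_sum[OF P_carrier mu_carrier] .

lemma sum_P_mult_vec_mu: "(\<Sum>k<n. (P m *\<^sub>v mu) $ k * mu $ k) = signal m"
  unfolding signal_def using mu_carrier P_carrier[of m]
  by (simp add: scalar_prod_def atLeast0LessThan mult.commute)

lemma sum_P_mult_vec_P_mult_vec:
  assumes "a \<le> q" "b \<le> q"
  shows "(\<Sum>k<n. (P a *\<^sub>v mu) $ k * (P b *\<^sub>v mu) $ k) = signal (min a b)"
proof -
  have "(\<Sum>k<n. (P a *\<^sub>v mu) $ k * (P b *\<^sub>v mu) $ k) = ((P a)\<^sup>T *\<^sub>v mu) \<bullet> (P b *\<^sub>v mu)"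
    using P_symmetric[OF assms(1)] P_carrier[of a] P_carrier[of b] mu_carrier
    by (simp add: scalar_prod_def atLeast0LessThan)
  also have "\<dots> = mu \<bullet> ((P a * P b) *\<^sub>v mu)"
    using P_carrier[of a] P_carrier[of b] mu_carrier by (subst transpose_vec_mult_scalar[of _ n n]) auto
  finally show ?thesis unfolding signal_def P_mult[OF assms] .
qed

lemma noise_inner_P:
  "a \<le> q \<Longrightarrow> b \<le> q \<Longrightarrow> noise_inner n Om (P a) (P b) = noise (min a b)"
  unfolding noise_def
  by (simp add: noise_inner_eq_mtrace[OF P_carrier P_carrier Om_carrier Om_symmetric] P_symmetric P_mult)

lemma signal_increment:
  assumes "a \<le> b" "b \<le> q"
  shows "(\<Sum>k<n. ((P b *\<^sub>v mu) $ k - (P a *\<^sub>v mu) $ k)\<^sup>2) = signal b - signal a"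
proof -
  let ?u = "\<lambda>m k. (P m *\<^sub>v mu) $ k"
  have "(\<Sum>k<n. (?u b k - ?u a k)\<^sup>2)
      = (\<Sum>k<n. ?u b k * ?u b k - 2 * (?u b k * ?u a k) + ?u a k * ?u a k)"
    by (intro sum.cong refl) (simp add: power2_eq_square algebra_simps)
  also have "\<dots> = (\<Sum>k<n. ?u b k * ?u b k) - 2 * (\<Sum>k<n. ?u b k * ?u a k)
      + (\<Sum>k<n. ?u a k * ?u a k)"
    by (simp only: sum_subtractf sum.distrib sum_distrib_left)
  also have "\<dots> = signal b - signal a"
    using assms by (simp add: sum_P_mult_vec_P_mult_vec min_def)
  finally show ?thesis .
qed

lemma noise_increment:
  assumes "a \<le> b" "b \<le> q"
  shows "noise_inner n Om (P b - P a) (P b - P a) = noise b - noise a"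
proof -
  have entries: "(P b - P a) $$ (k, i) = P b $$ (k, i) - P a $$ (k, i)" if "k < n" "i < n" for k i
    using P_carrier[of a] P_carrier[of b] that by simp
  have "noise_inner n Om (P b - P a) (P b - P a) = (\<Sum>k<n. \<Sum>i<n. \<Sum>j<n.
      (P b $$ (k, i) - P a $$ (k, i)) * (P b $$ (k, j) - P a $$ (k, j)) * Om $$ (i, j))"
    unfolding noise_inner_def by (intro sum.cong refl) (simp add: entries)
  also have "\<dots> = noise_inner n Om (P b) (P b) - noise_inner n Om (P b) (P a)
      - noise_inner n Om (P a) (P b) + noise_inner n Om (P a) (P a)"
    unfolding noise_inner_def by (simp add: algebra_simps sum_subtractf sum.distrib)
  also have "\<dots> = noise b - noise a" using assms by (simp add: noise_inner_P min_def)
  finally show ?thesis .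
qed

lemma signal_mono: "a \<le> b \<Longrightarrow> b \<le> q \<Longrightarrow> signal a \<le> signal b"
  using signal_increment[of a b] sum_nonneg[of "{..<n}" "\<lambda>k. ((P b *\<^sub>v mu) $ k - (P a *\<^sub>v mu) $ k)\<^sup>2"]
  by simp

lemma noise_mono: "a \<le> b \<Longrightarrow> b \<le> q \<Longrightarrow> noise a \<le> noise b"
  using noise_increment[of a b] noise_inner_self_nonneg[OF Om_pos_def Om_carrier, of "P b - P a"]
  by simp

text \<open>Equal noise forces \<open>P a = P b\<close>, since \<open>\<Omega>\<close> is positive definite.\<close>

lemma signal_eq_if_noise_eq:
  assumes "a \<le> b" "b \<le> q" "noise a = noise b"
  shows "signal a = signal b"
proof -
  have "noise_inner n Om (P b - P a) (P b - P a) = 0" using noise_increment assms by simp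
  then have "(P b - P a) $$ (k, i) = 0" if "k < n" "i < n" for k i
    using noise_inner_self_pos[OF Om_pos_def Om_carrier that, of "P b - P a"] by auto
  then have "P b $$ (k, i) = P a $$ (k, i)" if "k < n" "i < n" for k i
    using that P_carrier[of a] P_carrier[of b] by fastforce
  then have "(P b *\<^sub>v mu) $ k = (P a *\<^sub>v mu) $ k" if "k < n" for k
    using that by (simp add: P_mult_vec_index)
  then show ?thesis using signal_increment[OF assms(1,2)] by simp
qed

lemma noise_1_pos:
  assumes "1 \<le> q"
  shows "0 < noise 1"
proof -
  obtain k i where "k < n" "i < n" "P 1 $$ (k, i) \<noteq> 0" using P_1_nonzero[OF assms] by blast
  then have "0 < noise_inner n Om (P 1) (P 1)" by (rule noise_inner_self_pos[OF Om_pos_def Om_carrier])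
  then show ?thesis using noise_inner_P[of 1 1] assms by simp
qed

lemma signal_le_norm: "b \<le> q \<Longrightarrow> signal b \<le> (\<Sum>k<n. (mu $ k)\<^sup>2)"
proof -
  assume "b \<le> q"
  let ?u = "\<lambda>k. (P b *\<^sub>v mu) $ k"
  have "0 \<le> (\<Sum>k<n. (mu $ k - ?u k)\<^sup>2)" by (simp add: sum_nonneg)
  also have "\<dots> = (\<Sum>k<n. (mu $ k)\<^sup>2 - 2 * (?u k * mu $ k) + ?u k * ?u k)"
    by (intro sum.cong refl) (simp add: power2_eq_square algebra_simps)
  also have "\<dots> = (\<Sum>k<n. (mu $ k)\<^sup>2) - 2 * (\<Sum>k<n. ?u k * mu $ k) + (\<Sum>k<n. ?u k * ?u k)"
    by (simp only: sum_subtractf sum.distrib sum_distrib_left)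
  also have "\<dots> = (\<Sum>k<n. (mu $ k)\<^sup>2) - signal b"
    using \<open>b \<le> q\<close> by (simp add: sum_P_mult_vec_mu sum_P_mult_vec_P_mult_vec)
  finally show ?thesis by simp
qed

lemma theta_eq:
  "theta X nu mu Om m = ((signal m - signal (m - 1)) / real n) / (noise m - noise (m - 1))"
proof -
  have "mu \<bullet> ((P m - P (m - 1)) *\<^sub>v mu) = signal m - signal (m - 1)"
    unfolding signal_def using P_carrier[of m] P_carrier[of "m - 1"] mu_carrier
    by (simp add: minus_mult_distrib_mat_vec[of _ n n] scalar_prod_minus_distrib[of _ n])
  moreover have "mtrace ((P m - P (m - 1)) * Om) = noise m - noise (m - 1)"
    using P_carrier[of m] P_carrier[of "m - 1"] Om_carrier
    by (simp add: noise_def mtrace_def minus_mult_distrib_mat[of _ n n] sum_subtractf)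
  moreover have "dim_vec mu = n" using mu_carrier by simp
  ultimately show ?thesis unfolding theta_def by simp
qed

end

context nested_model
begin

lemma projw_carrier: "projw X nu M w \<in> carrier_mat n n"
  using X_carrier unfolding projw_def by auto

lemma projw_index:
  "k < n \<Longrightarrow> i < n \<Longrightarrow> projw X nu M w $$ (k, i) = (\<Sum>m=1..M. w m * P m $$ (k, i))"
  using X_carrier unfolding projw_def by auto

lemma projw_mult_vec_index:
  assumes "k < n"
  shows "(projw X nu M w *\<^sub>v mu) $ k = (\<Sum>m=1..M. w m * (P m *\<^sub>v mu) $ k)"
proof -
  have "(projw X nu M w *\<^sub>v mu) $ k = (\<Sum>i<n. (\<Sum>m=1..M. w m * P m $$ (k, i)) * mu $ i)"
    using mult_mat_vec_index_sum[OF projw_carrier mu_carrier assms] assms by (simp add: projw_index)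
  also have "\<dots> = (\<Sum>m=1..M. w m * (P m *\<^sub>v mu) $ k)"
    by (simp add: sum_weighted_linear P_mult_vec_index[OF assms])
  finally show ?thesis .
qed

lemma projw_indicator:
  assumes "m \<in> {1..M}"
  shows "projw X nu M (\<lambda>l. if l = m then 1 else 0) = P m"
proof (rule eq_matI)
  fix k i assume "k < dim_row (P m)" "i < dim_col (P m)"
  then have "k < n" "i < n" using P_carrier[of m] by auto
  then have "projw X nu M (\<lambda>l. if l = m then 1 else 0) $$ (k, i)
      = (\<Sum>l=1..M. (if l = m then 1 else 0) * P l $$ (k, i))"
    by (rule projw_index)
  also have "\<dots> = (\<Sum>l=1..M. if l = m then P m $$ (k, i) else 0)" by (intro sum.cong refl) simp
  finally show "projw X nu M (\<lambda>l. if l = m then 1 else 0) $$ (k, i) = P m $$ (k, i)"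
    using assms by simp
qed (use P_carrier[of m] projw_carrier[of M] in auto)

end

locale nested_regression = nested_model n p q X nu Om mu + noise_model n Mes eps Om
  for n p q X nu Om mu and Mes :: "'a measure" and eps
begin

lemma risk_projw:
  assumes "M \<le> q"
  shows "risk Mes eps mu (projw X nu M w) = nested_risk (\<Sum>k<n. (mu $ k)\<^sup>2) signal noise M w"
proof -
  let ?u = "\<lambda>m k. (P m *\<^sub>v mu) $ k"
  let ?v = "\<lambda>k. \<Sum>m=1..M. w m * ?u m k"
  have "(\<Sum>k<n. ((projw X nu M w *\<^sub>v mu) $ k - mu $ k)\<^sup>2)
      = (\<Sum>k<n. ?v k * ?v k - 2 * (?v k * mu $ k) + (mu $ k)\<^sup>2)"
    by (intro sum.cong refl) (simp add: projw_mult_vec_index power2_eq_square algebra_simps)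
  also have "\<dots> = (\<Sum>k<n. ?v k * ?v k) - 2 * (\<Sum>k<n. ?v k * mu $ k) + (\<Sum>k<n. (mu $ k)\<^sup>2)"
    by (simp only: sum_subtractf sum.distrib sum_distrib_left)
  also have "\<dots> = (\<Sum>m=1..M. \<Sum>l=1..M. w m * w l * signal (min m l))
      - 2 * (\<Sum>m=1..M. w m * signal m) + (\<Sum>k<n. (mu $ k)\<^sup>2)"
    unfolding sum_weighted_bilinear sum_weighted_linear sum_P_mult_vec_mu
    using assms by (simp add: sum_P_mult_vec_P_mult_vec)
  finally have bias: "(\<Sum>k<n. ((projw X nu M w *\<^sub>v mu) $ k - mu $ k)\<^sup>2) = \<dots>" .
  have "noise_inner n Om (projw X nu M w) (projw X nu M w)
      = (\<Sum>m=1..M. \<Sum>l=1..M. w m * w l * noise (min m l))"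
    using assms by (simp add: noise_inner_weighted[OF projw_index] noise_inner_P)
  then show ?thesis
    unfolding risk_linear_estimator[OF projw_carrier mu_carrier] bias nested_risk_def
    by (simp add: distrib_left sum.distrib)
qed

lemma riskm_eq_nested_risk:
  assumes "m \<in> {1..M}" "M \<le> q"
  shows "riskm Mes eps mu X nu m
    = nested_risk (\<Sum>k<n. (mu $ k)\<^sup>2) signal noise M (\<lambda>l. if l = m then 1 else 0)"
  unfolding riskm_def projw_indicator[OF assms(1), symmetric] risk_projw[OF assms(2)] ..

lemma increment_ratio_antimono:
  assumes "0 < n"
    and theta_antimono: "\<forall>m. 1 \<le> m \<and> m < q \<longrightarrow> theta X nu mu Om (Suc m) \<le> theta X nu mu Om m"
    and "1 \<le> i" "i \<le> j" "j \<le> q"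
  shows "(signal j - signal (j - 1)) / (noise j - noise (j - 1))
    \<le> (signal i - signal (i - 1)) / (noise i - noise (i - 1))"
proof -
  define r where "r m = (signal m - signal (m - 1)) / (noise m - noise (m - 1))" for m
  have theta_r: "theta X nu mu Om m = r m / real n" for m
    unfolding theta_eq r_def by (simp add: divide_divide_eq_left mult.commute)
  have "- theta X nu mu Om i \<le> - theta X nu mu Om j"
    using mono_on_interval_Suc[of 1 q "\<lambda>m. - theta X nu mu Om m" i j] theta_antimono assms(3-5)
    by auto
  then have "r j / real n \<le> r i / real n" unfolding theta_r by simp
  then show ?thesis using \<open>0 < n\<close> unfolding r_def[symmetric] by (simp add: divide_le_cancel)
qed

lemma selected_model_risk_bounds:
  assumes "0 < n" "1 \<le> M" "M \<le> q"
    and theta_antimono: "\<forall>m. 1 \<le> m \<and> m < q \<longrightarrow> theta X nu mu Om (Suc m) \<le> theta X nu mu Om m"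
    and mstar: "mstar \<in> {1..M}" "\<forall>m\<in>{1..M}. riskm Mes eps mu X nu mstar \<le> riskm Mes eps mu X nu m"
    and wstar: "wstar \<in> simplexW M"
      "\<forall>w\<in>simplexW M. riskw Mes eps mu X nu M wstar \<le> riskw Mes eps mu X nu M w"
  shows "riskm Mes eps mu X nu mstar \<le> 2 * riskw Mes eps mu X nu M wstar"
    and "riskw Mes eps mu X nu M wstar \<le> riskm Mes eps mu X nu mstar"
    and "0 < riskw Mes eps mu X nu M wstar"
proof -
  let ?R = "nested_risk (\<Sum>k<n. (mu $ k)\<^sup>2) signal noise M"
  have riskw_eq: "riskw Mes eps mu X nu M w = ?R w" for w
    unfolding riskw_def using risk_projw[OF \<open>M \<le> q\<close>] .
  have signal_step: "signal (j - 1) \<le> signal j" and noise_step: "noise (j - 1) \<le> noise j"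
    and flat_step: "noise (j - 1) = noise j \<Longrightarrow> signal (j - 1) = signal j"
    if "j \<in> {1..M}" for j
    using that \<open>M \<le> q\<close> signal_mono noise_mono signal_eq_if_noise_eq by auto
  have ratio: "(signal j - signal (j - 1)) / (noise j - noise (j - 1))
      \<le> (signal i - signal (i - 1)) / (noise i - noise (i - 1))"
    if "1 \<le> i" "i \<le> j" "j \<le> M" for i j
    using increment_ratio_antimono[OF \<open>0 < n\<close> theta_antimono] that \<open>M \<le> q\<close> by simp
  have "signal M \<le> (\<Sum>k<n. (mu $ k)\<^sup>2)" "0 < noise 1"
    using signal_le_norm noise_1_pos \<open>1 \<le> M\<close> \<open>M \<le> q\<close> by auto
  moreover have "(\<Sum>m=1..M. wstar m) = 1" using wstar(1) unfolding simplexW_def by simp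
  ultimately have bounds: "0 < ?R wstar" "\<exists>m0\<in>{1..M}. ?R (\<lambda>m. if m = m0 then 1 else 0) \<le> 2 * ?R wstar"
    using nested_risk_average_bounds[where S = "\<Sum>k<n. (mu $ k)\<^sup>2" and c = signal and t = noise,
        OF \<open>1 \<le> M\<close> signal_0 noise_0 signal_step noise_step flat_step] ratio
    by blast+
  then obtain m0 where m0: "m0 \<in> {1..M}" "?R (\<lambda>m. if m = m0 then 1 else 0) \<le> 2 * ?R wstar"
    by blast
  have "riskm Mes eps mu X nu mstar \<le> riskm Mes eps mu X nu m0" using mstar(2) m0(1) by blast
  then show "riskm Mes eps mu X nu mstar \<le> 2 * riskw Mes eps mu X nu M wstar"
    using m0 riskw_eq riskm_eq_nested_risk[OF m0(1) \<open>M \<le> q\<close>] by simp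
  have "(\<lambda>l. if l = mstar then 1 else 0) \<in> simplexW M" using mstar(1) unfolding simplexW_def by simp
  then have "riskw Mes eps mu X nu M wstar \<le> ?R (\<lambda>l. if l = mstar then 1 else 0)"
    using wstar(2) riskw_eq by metis
  then show "riskw Mes eps mu X nu M wstar \<le> riskm Mes eps mu X nu mstar"
    using riskm_eq_nested_risk[OF mstar(1) \<open>M \<le> q\<close>] by simp
  show "0 < riskw Mes eps mu X nu M wstar" using bounds(1) riskw_eq by simp
qed

end

theorem theorem1:
  fixes Mes :: "nat \<Rightarrow> 'a measure"
    and eps :: "nat \<Rightarrow> nat \<Rightarrow> 'a \<Rightarrow> real"
    and X :: "nat \<Rightarrow> real mat" and beta :: "nat \<Rightarrow> real vec" and Om :: "nat \<Rightarrow> real mat"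
    and p q M :: "nat \<Rightarrow> nat" and nu :: "nat \<Rightarrow> nat \<Rightarrow> nat"
    and mstar :: "nat \<Rightarrow> nat" and wstar :: "nat \<Rightarrow> nat \<Rightarrow> real"
    and c1 c2 :: real
  assumes model: "\<forall>\<^sub>F n in sequentially.
      prob_space (Mes n) \<and>
      X n \<in> carrier_mat n (p n) \<and> beta n \<in> carrier_vec (p n) \<and> p n < n \<and>
      nu n 0 = 0 \<and> (\<forall>m < q n. nu n m < nu n (Suc m)) \<and> nu n (q n) = p n \<and>
      (\<forall>m \<in> {1..q n}. full_col_rank (first_cols (X n) (nu n m))) \<and>
      2 \<le> M n \<and> M n \<le> q n \<and>
      Om n \<in> carrier_mat n n \<and> pos_def (Om n) \<and>
      (\<forall>i < n. integrable (Mes n) (eps n i) \<and> (\<integral>\<omega>. eps n i \<omega> \<partial>Mes n) = 0) \<and>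
      (\<forall>i < n. \<forall>j < n. integrable (Mes n) (\<lambda>\<omega>. eps n i \<omega> * eps n j \<omega>) \<and>
          (\<integral>\<omega>. eps n i \<omega> * eps n j \<omega> \<partial>Mes n) = Om n $$ (i, j))"
  and mstar_min: "\<forall>\<^sub>F n in sequentially. mstar n \<in> {1..M n} \<and>
      (\<forall>m \<in> {1..M n}. riskm (Mes n) (eps n) (X n *\<^sub>v beta n) (X n) (nu n) (mstar n)
                       \<le> riskm (Mes n) (eps n) (X n *\<^sub>v beta n) (X n) (nu n) m)"
  and wstar_min: "\<forall>\<^sub>F n in sequentially. wstar n \<in> simplexW (M n) \<and>
      (\<forall>w \<in> simplexW (M n). riskw (Mes n) (eps n) (X n *\<^sub>v beta n) (X n) (nu n) (M n) (wstar n)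
                       \<le> riskw (Mes n) (eps n) (X n *\<^sub>v beta n) (X n) (nu n) (M n) w)"
  and A1: "\<exists>C. \<forall>\<^sub>F n in sequentially.
      ((X n *\<^sub>v beta n) \<bullet> (X n *\<^sub>v beta n)) / real n \<le> C"
  and A2: "0 < c1" "c1 \<le> c2"
      "\<And>n k. eigenvalue (Om n) k \<Longrightarrow> c1 < k \<and> k < c2"
  and A3: "\<forall>\<^sub>F n in sequentially. \<forall>m. 1 \<le> m \<and> m < q n \<longrightarrow>
      theta (X n) (nu n) (X n *\<^sub>v beta n) (Om n) (Suc m) \<le> theta (X n) (nu n) (X n *\<^sub>v beta n) (Om n) m"
  and A6: "\<forall>\<^sub>F n in sequentially.
      (let D = {m \<in> {1..q n}. theta (X n) (nu n) (X n *\<^sub>v beta n) (Om n) m > 0};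
           d = Max D;
           R = riskm (Mes n) (eps n) (X n *\<^sub>v beta n) (X n) (nu n)
       in D \<noteq> {} \<and>
          (\<exists>m'. 1 \<le> m' \<and> m' \<le> d - 1 \<and>
             (\<forall>m. 2 \<le> m \<and> m \<le> m' \<longrightarrow> R m < R (m - 1)) \<and>
             (\<forall>m. m' < m \<and> m \<le> d \<longrightarrow> R m \<ge> R (m - 1)) \<and>
             R d > R (d - 1)))"
  shows "\<forall>\<^sub>F n in sequentially.
      (let Rm = riskm (Mes n) (eps n) (X n *\<^sub>v beta n) (X n) (nu n) (mstar n);
           Rw = riskw (Mes n) (eps n) (X n *\<^sub>v beta n) (X n) (nu n) (M n) (wstar n)
       in Rm / 2 \<le> Rw \<and> Rw \<le> Rm \<and> 0 < Rw \<and> Rm - Rw \<le> Rm / 2)"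
  using model mstar_min wstar_min A3
proof eventually_elim
  case (elim n)
  then have X: "X n \<in> carrier_mat n (p n)" and beta: "beta n \<in> carrier_vec (p n)"
    and "p n < n" "2 \<le> M n" "M n \<le> q n" by blast+
  have "nested_regression n (p n) (q n) (X n) (nu n) (Om n) (X n *\<^sub>v beta n) (Mes n) (eps n)"
    using elim(1) mult_mat_vec_carrier[OF X beta]
    unfolding nested_regression_def nested_model_def nested_design_def nested_model_axioms_def
      noise_model_def
    by (elim conjE) (intro conjI; assumption)
  then interpret nested_regression n "p n" "q n" "X n" "nu n" "Om n" "X n *\<^sub>v beta n" "Mes n" "eps n" .
  have "0 < n" "1 \<le> M n" using \<open>p n < n\<close> \<open>2 \<le> M n\<close> by simp_all
  from selected_model_risk_bounds[OF this \<open>M n \<le> q n\<close> elim(4)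
      elim(2)[THEN conjunct1] elim(2)[THEN conjunct2] elim(3)[THEN conjunct1] elim(3)[THEN conjunct2]]
  show ?case unfolding Let_def by simp
qed

end
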